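(* Let $n\ge 0$ and $\alpha\ge 1$ be integers, $N=2^{n+1}$, $c=2^{\alpha}+1$, and consider the 1D-Tree and the $c$-DAG over the uniform dataset $\mathcal{D}=\{0,\dots,N-1\}$ (as described in the context). For $s=1$, \[ \mathbb{E}_{\mathcal{I}_1}\left[\frac{FP_{\mathrm{Tree}}(Q)}{FP_{c\text{-DAG}}(Q)}\right]=1, \] and for every real $s$ with $1<s\le N$, \[ \mathbb{E}_{\mathcal{I}_s}\left[\frac{FP_{\mathrm{Tree}}(Q)}{FP_{c\text{-DAG}}(Q)}\right]\ \ge\ \max\left\{1,\ \frac12\left\lfloor\log_2\frac{N}{s}\right\rfloor\right\}. \]
   Context: The 1D-Tree over $\mathcal{D}=\{0,\dots,N-1\}\subset[0,N)$ has levels $\ell=0,\dots,n+1$; its level-$\ell$ nodes are the intervals $[m2^{n-\ell+1},(m+1)2^{n-\ell+1})$, $m=0,\dots,2^\ell-1$. The $c$-DAG over $\mathcal{D}$ has levels $\ell=0,\dots,n+1$; with $u_\ell=2^{n-\ell+1}/(c-1)$, its level-$\ell$ nodes are the intervals $[mu_\ell,\,mu_\ell+2^{n-\ell+1})$, $m=0,1,\dots,(c-1)2^\ell-(c-1)$ (a node $[a,a+L)$ has children $[a+jL/(2(c-1)),\,a+jL/(2(c-1))+L/2)$, $j=0,\dots,c-1$). For a query $Q$, SRC-search on a structure returns a node $v$ of the deepest level whose interval contains $Q$. The competitive false-positive ratio is $\frac{FP_{\mathrm{Tree}}(Q)}{FP_{c\text{-DAG}}(Q)}=\frac{|\mathcal{D}\cap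 \mathrm{range}_v|}{|\mathcal{D}\cap\mathrm{range}_w|}$, where $v$ is the node returned on the 1D-Tree and $w$ the node returned on the $c$-DAG (all nodes of a given level contain the same number of data points). For query length $s$, $\mathcal{I}_s$ is the distribution of $Q=[x,x+s)$ with $x$ uniform on $[0,N-s]$ (for $s=N$, $x=0$); for $s=1$ queries are single data points, i.e. $x$ uniform on the integers $\{0,\dots,N-1\}$. *)

theory Defs
  imports "HOL-Analysis.Analysis"
begin

definition dataset :: "nat \<Rightarrow> nat set" where
  "dataset n = {0..<2^(n+1)}"

definition tree_nodes :: "nat \<Rightarrow> nat set" where
  "tree_nodes l = {m. m < 2^l}"

definition tree_range :: "nat \<Rightarrow> nat \<Rightarrow> nat \<Rightarrow> real set" where
  "tree_range n l m = {real m * 2^(n+1-l) ..< (real m + 1) * 2^(n+1-l)}"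

definition dag_nodes :: "nat \<Rightarrow> nat \<Rightarrow> nat set" where
  "dag_nodes c l = {m. m \<le> (c-1) * 2^l - (c-1)}"

definition dag_range :: "nat \<Rightarrow> nat \<Rightarrow> nat \<Rightarrow> nat \<Rightarrow> real set" where
  "dag_range c n l m =
     {real m * (2^(n+1-l) / (real c - 1)) ..< real m * (2^(n+1-l) / (real c - 1)) + 2^(n+1-l)}"

definition query :: "real \<Rightarrow> real \<Rightarrow> real set" where
  "query x s = {x..<x+s}"

definition src_level :: "(nat \<Rightarrow> nat set) \<Rightarrow> (nat \<Rightarrow> nat \<Rightarrow> real set) \<Rightarrow> nat \<Rightarrow> real set \<Rightarrow> nat" where
  "src_level nodes rng n Q = Max {l. l \<le> n+1 \<and> (\<exists>m\<in>nodes l. Q \<subseteq> rng l m)}"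

definition src_node :: "(nat \<Rightarrow> nat set) \<Rightarrow> (nat \<Rightarrow> nat \<Rightarrow> real set) \<Rightarrow> nat \<Rightarrow> real set \<Rightarrow> nat \<times> nat" where
  "src_node nodes rng n Q =
     (let l = src_level nodes rng n Q in (l, SOME m. m \<in> nodes l \<and> Q \<subseteq> rng l m))"

text \<open>Number of data points in the range of a node (the false positives are counted this way).\<close>
definition data_in :: "nat \<Rightarrow> (nat \<Rightarrow> nat \<Rightarrow> real set) \<Rightarrow> nat \<times> nat \<Rightarrow> nat" where
  "data_in n rng v = card {d \<in> dataset n. real d \<in> rng (fst v) (snd v)}"

definition FP_tree :: "nat \<Rightarrow> real set \<Rightarrow> nat" where
  "FP_tree n Q = data_in n (tree_range n) (src_node tree_nodes (tree_range n) n Q)"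

definition FP_dag :: "nat \<Rightarrow> nat \<Rightarrow> real set \<Rightarrow> nat" where
  "FP_dag c n Q = data_in n (dag_range c n) (src_node (dag_nodes c) (dag_range c n) n Q)"

definition comp_ratio :: "nat \<Rightarrow> nat \<Rightarrow> real set \<Rightarrow> real" where
  "comp_ratio c n Q = real (FP_tree n Q) / real (FP_dag c n Q)"

text \<open>Expectation over I_s: for s = 1, x uniform on the integers {0..N-1};
  for s = N, x = 0; otherwise x uniform on [0, N-s].\<close>
definition exp_ratio :: "nat \<Rightarrow> nat \<Rightarrow> real \<Rightarrow> real" where
  "exp_ratio c n s =
    (let N = (2::real)^(n+1) in
     if s = 1 then (\<Sum>x\<in>dataset n. comp_ratio c n (query (real x) 1)) / N
     else if s = N then comp_ratio c n (query 0 s)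
     else (LINT x:{0..N-s}|lborel. comp_ratio c n (query x s)) / (N - s))"

end

(* Both structures return the deepest node containing the query, and a node of level l holds
   2^(n+1-l) data points; so the ratio is 2^(D - T), where T <= D are the levels reached in the
   tree and in the DAG. A unit query at an integer is a leaf of both, whence the case s = 1.
   For 2^k s <= N < 2^(k+1) s put h = 2^(n-k), so that h < s <= 2h. Since c - 1 = 2^alpha is
   even, every level of the DAG contains the tree nodes shifted by half a block. Hence every
   query fits into a DAG node of level k - 1, and a query starting in [mB - h, mB + h - s] next
   to a boundary mB of tree level j <= k fits into one of level k, whereas a query straddling
   such a boundary has T < j. Weighting these events by 2^(k-j) gives a pointwise lower bound
   for twice the ratio, whose integral over the starting points is kN + 2h - s >= k (N - s). *)

theory Submission
  imports Defs
begin

lemma query_subset_iff: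
  fixes a b :: real
  assumes "s > 0"
  shows "query x s \<subseteq> {a..<b} \<longleftrightarrow> a \<le> x \<and> x + s \<le> b"
proof
  assume sub: "query x s \<subseteq> {a..<b}"
  have "x \<in> query x s" "max x b \<in> query x s \<or> x + s \<le> b"
    using assms by (auto simp: query_def)
  then show "a \<le> x \<and> x + s \<le> b"
    using sub by auto
qed (auto simp: query_def)

lemma src_level_ge:
  assumes "l \<le> n + 1" "m \<in> nodes l" "Q \<subseteq> rng l m"
  shows "l \<le> src_level nodes rng n Q"
  unfolding src_level_def using assms by (intro Max_ge) (auto intro: finite_subset[of _ "{..n+1}"])

lemma src_level_le_and_node:
  assumes "l \<le> n + 1" "m \<in> nodes l" "Q \<subseteq> rng l m"
  shows "src_level nodes rng n Q \<le> n + 1"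
    and "\<exists>m\<in>nodes (src_level nodes rng n Q). Q \<subseteq> rng (src_level nodes rng n Q) m"
proof -
  let ?S = "{l. l \<le> n + 1 \<and> (\<exists>m\<in>nodes l. Q \<subseteq> rng l m)}"
  have "Max ?S \<in> ?S"
    using assms by (intro Max_in) (auto intro: finite_subset[of _ "{..n+1}"])
  then show "src_level nodes rng n Q \<le> n + 1"
    and "\<exists>m\<in>nodes (src_level nodes rng n Q). Q \<subseteq> rng (src_level nodes rng n Q) m"
    unfolding src_level_def by auto
qed

lemma data_in_src_node:
  assumes "l \<le> n + 1" "m \<in> nodes l" "Q \<subseteq> rng l m"
    and "\<And>l m. l \<le> n + 1 \<Longrightarrow> m \<in> nodes l \<Longrightarrow> data_in n rng (l, m) = f l"
  shows "data_in n rng (src_node nodes rng n Q) = f (src_level nodes rng n Q)"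
proof -
  let ?l = "src_level nodes rng n Q"
  note level = src_level_le_and_node[where nodes = nodes and rng = rng, OF assms(1-3)]
  have "(SOME m. m \<in> nodes ?l \<and> Q \<subseteq> rng ?l m) \<in> nodes ?l"
    using level(2) by (rule someI2_bex) simp
  then show ?thesis
    unfolding src_node_def Let_def using assms(4) level(1) by simp
qed

lemma card_nat_in_interval:
  fixes a :: real
  assumes "0 \<le> a" "a + real L \<le> real N"
  shows "card {d \<in> {0..<N}. real d \<in> {a..<a + real L}} = L"
proof -
  have ceil: "int (nat \<lceil>a\<rceil>) = \<lceil>a\<rceil>" using assms(1) by simp
  have mem: "real d \<in> {a..<a + real L} \<longleftrightarrow> d \<in> {nat \<lceil>a\<rceil>..<nat \<lceil>a\<rceil> + L}" for d
  proof -
    have "a \<le> real d \<longleftrightarrow> \<lceil>a\<rceil> \<le> int d" by (simp add: ceiling_le_iff)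
    moreover have "real d < a + real L \<longleftrightarrow> int d - int L < \<lceil>a\<rceil>"
      by (simp add: less_ceiling_iff algebra_simps)
    ultimately show ?thesis using ceil by (simp only: atLeastLessThan_iff) linarith
  qed
  have "\<lceil>a\<rceil> + int L \<le> int N"
    using ceiling_mono[OF assms(2)] ceiling_add_of_int[of a "int L"] by simp
  then have "nat \<lceil>a\<rceil> + L \<le> N" using ceil by linarith
  then have "{d \<in> {0..<N}. d \<in> {nat \<lceil>a\<rceil>..<nat \<lceil>a\<rceil> + L}} = {nat \<lceil>a\<rceil>..<nat \<lceil>a\<rceil> + L}"
    by auto
  then show ?thesis unfolding mem by simp
qed

lemma power2_level_split: "l \<le> n + 1 \<Longrightarrow> (2::real) ^ l * 2 ^ (n + 1 - l) = 2 ^ (n + 1)"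
  by (simp flip: power_add)

definition tree_level :: "nat \<Rightarrow> real \<Rightarrow> real \<Rightarrow> nat" where
  "tree_level n s x = src_level tree_nodes (tree_range n) n (query x s)"

definition dag_level :: "nat \<Rightarrow> nat \<Rightarrow> real \<Rightarrow> real \<Rightarrow> nat" where
  "dag_level c n s x = src_level (dag_nodes c) (dag_range c n) n (query x s)"

lemma query_subset_tree_range_iff:
  "s > 0 \<Longrightarrow> query x s \<subseteq> tree_range n l m \<longleftrightarrow>
     real m * 2 ^ (n + 1 - l) \<le> x \<and> x + s \<le> (real m + 1) * 2 ^ (n + 1 - l)"
  unfolding tree_range_def by (rule query_subset_iff)

lemma query_subset_dag_range_iff:
  assumes "s > 0" "c = 2 ^ \<alpha> + 1"
  shows "query x s \<subseteq> dag_range c n l i \<longleftrightarrow>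
     real i * (2 ^ (n + 1 - l) / 2 ^ \<alpha>) \<le> x \<and>
     x + s \<le> real i * (2 ^ (n + 1 - l) / 2 ^ \<alpha>) + 2 ^ (n + 1 - l)"
  using assms unfolding dag_range_def by (simp add: query_subset_iff)

lemma query_subset_tree_root:
  "s > 0 \<Longrightarrow> 0 \<le> x \<Longrightarrow> x + s \<le> 2 ^ (n + 1) \<Longrightarrow>
    0 \<in> tree_nodes 0 \<and> query x s \<subseteq> tree_range n 0 0"
  by (simp add: tree_nodes_def query_subset_tree_range_iff)

lemma query_subset_dag_root:
  "s > 0 \<Longrightarrow> c = 2 ^ \<alpha> + 1 \<Longrightarrow> 0 \<le> x \<Longrightarrow> x + s \<le> 2 ^ (n + 1) \<Longrightarrow>
    0 \<in> dag_nodes c 0 \<and> query x s \<subseteq> dag_range c n 0 0"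
  by (simp add: dag_nodes_def query_subset_dag_range_iff)

lemma tree_level_ge:
  assumes "s > 0" "l \<le> n + 1" "m < 2 ^ l"
    and "real m * 2 ^ (n + 1 - l) \<le> x" "x + s \<le> (real m + 1) * 2 ^ (n + 1 - l)"
  shows "l \<le> tree_level n s x"
  unfolding tree_level_def
  by (rule src_level_ge[of _ _ m])
    (use assms in \<open>simp_all add: tree_nodes_def query_subset_tree_range_iff\<close>)

lemma dag_level_ge:
  assumes "s > 0" "c = 2 ^ \<alpha> + 1" "l \<le> n + 1" "i \<le> 2 ^ \<alpha> * 2 ^ l - 2 ^ \<alpha>"
    and "real i * (2 ^ (n + 1 - l) / 2 ^ \<alpha>) \<le> x"
    and "x + s \<le> real i * (2 ^ (n + 1 - l) / 2 ^ \<alpha>) + 2 ^ (n + 1 - l)"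
  shows "l \<le> dag_level c n s x"
  unfolding dag_level_def
  by (rule src_level_ge[of _ _ i])
    (use assms in \<open>simp_all add: dag_nodes_def query_subset_dag_range_iff\<close>)

lemma tree_level_node:
  assumes "s > 0" "0 \<le> x" "x + s \<le> 2 ^ (n + 1)"
  shows "tree_level n s x \<le> n + 1"
    and "\<exists>m < 2 ^ tree_level n s x. real m * 2 ^ (n + 1 - tree_level n s x) \<le> x \<and>
           x + s \<le> (real m + 1) * 2 ^ (n + 1 - tree_level n s x)"
  using src_level_le_and_node[where nodes = tree_nodes and rng = "tree_range n",
      of 0 n 0 "query x s"]
    query_subset_tree_root[OF assms] assms(1)
  unfolding tree_level_def by (auto simp: tree_nodes_def query_subset_tree_range_iff)

lemma dag_level_le:
  assumes "s > 0" "c = 2 ^ \<alpha> + 1" "0 \<le> x" "x + s \<le> 2 ^ (n + 1)"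
  shows "dag_level c n s x \<le> n + 1"
  using src_level_le_and_node(1)[where nodes = "dag_nodes c" and rng = "dag_range c n", of 0 n 0]
    query_subset_dag_root[OF assms]
  unfolding dag_level_def by simp

lemma data_in_tree_node:
  assumes "l \<le> n + 1" "m < 2 ^ l"
  shows "data_in n (tree_range n) (l, m) = 2 ^ (n + 1 - l)"
proof -
  have "real (m + 1) \<le> real (2 ^ l)"
    using assms(2) by (simp only: of_nat_le_iff)
  then have "real m + 1 \<le> 2 ^ l" by simp
  then have "(real m + 1) * 2 ^ (n + 1 - l) \<le> (2::real) ^ (n + 1)"
    using power2_level_split[OF assms(1)] by (metis mult_right_mono zero_le_numeral zero_le_power)
  then show ?thesis
    unfolding data_in_def tree_range_def dataset_def
    using card_nat_in_interval[of "real m * 2 ^ (n + 1 - l)" "2 ^ (n + 1 - l)" "2 ^ (n + 1)"]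
    by (simp add: algebra_simps)
qed

lemma data_in_dag_node:
  assumes "c = 2 ^ \<alpha> + 1" "l \<le> n + 1" "i \<le> 2 ^ \<alpha> * 2 ^ l - 2 ^ \<alpha>"
  shows "data_in n (dag_range c n) (l, i) = 2 ^ (n + 1 - l)"
proof -
  have "real i \<le> real (2 ^ \<alpha> * 2 ^ l - 2 ^ \<alpha>)"
    using assms(3) by (simp only: of_nat_le_iff)
  then have "real i \<le> 2 ^ \<alpha> * (2 ^ l - 1)" by (simp add: of_nat_diff algebra_simps)
  then have "real i / 2 ^ \<alpha> * 2 ^ (n + 1 - l) \<le> (2 ^ l - 1) * 2 ^ (n + 1 - l)"
    by (intro mult_right_mono) (simp_all add: field_simps)
  then have "real i * (2 ^ (n + 1 - l) / 2 ^ \<alpha>) + 2 ^ (n + 1 - l) \<le> (2::real) ^ (n + 1)"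
    using power2_level_split[OF assms(2)] by (simp add: algebra_simps)
  then show ?thesis
    unfolding data_in_def dag_range_def dataset_def
    using assms(1) card_nat_in_interval[of "real i * (2 ^ (n + 1 - l) / 2 ^ \<alpha>)" "2 ^ (n + 1 - l)"
        "2 ^ (n + 1)"]
    by simp
qed

lemma tree_level_le_dag_level:
  assumes "s > 0" "c = 2 ^ \<alpha> + 1" "0 \<le> x" "x + s \<le> 2 ^ (n + 1)"
  shows "tree_level n s x \<le> dag_level c n s x"
proof -
  let ?t = "tree_level n s x"
  obtain m where m: "m < 2 ^ ?t" "real m * 2 ^ (n + 1 - ?t) \<le> x"
    "x + s \<le> (real m + 1) * 2 ^ (n + 1 - ?t)"
    using tree_level_node(2)[OF assms(1,3,4)] by blast
  have "m * 2 ^ \<alpha> \<le> (2 ^ ?t - 1) * 2 ^ \<alpha>"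
    using m(1) by (intro mult_le_mono1) simp
  then have "m * 2 ^ \<alpha> \<le> 2 ^ \<alpha> * 2 ^ ?t - 2 ^ \<alpha>"
    by (simp add: algebra_simps diff_mult_distrib)
  then show ?thesis
    using dag_level_ge[OF assms(1,2) tree_level_node(1)[OF assms(1,3,4)], of "m * 2 ^ \<alpha>"] m
    by (simp add: algebra_simps)
qed

lemma comp_ratio_query:
  assumes "s > 0" "c = 2 ^ \<alpha> + 1" "0 \<le> x" "x + s \<le> 2 ^ (n + 1)"
  shows "comp_ratio c n (query x s) = 2 ^ (dag_level c n s x - tree_level n s x)"
proof -
  have "FP_tree n (query x s) = 2 ^ (n + 1 - tree_level n s x)"
    unfolding FP_tree_def tree_level_def
    using query_subset_tree_root[OF assms(1,3,4)]
    by (intro data_in_src_node[where nodes = tree_nodes and rng = "tree_range n", of 0 n 0])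
      (simp_all add: tree_nodes_def data_in_tree_node)
  moreover have "FP_dag c n (query x s) = 2 ^ (n + 1 - dag_level c n s x)"
    unfolding FP_dag_def dag_level_def
    using query_subset_dag_root[OF assms]
    by (intro data_in_src_node[where nodes = "dag_nodes c" and rng = "dag_range c n", of 0 n 0])
      (use assms(2) in \<open>simp_all add: dag_nodes_def data_in_dag_node\<close>)
  moreover have "n + 1 - tree_level n s x
      = (n + 1 - dag_level c n s x) + (dag_level c n s x - tree_level n s x)"
    using tree_level_le_dag_level[OF assms] dag_level_le[OF assms] by simp
  ultimately show ?thesis
    unfolding comp_ratio_def by (simp add: power_add)
qed

lemma comp_ratio_ge_1:
  assumes "s > 0" "c = 2 ^ \<alpha> + 1" "0 \<le> x" "x + s \<le> 2 ^ (n + 1)"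
  shows "1 \<le> comp_ratio c n (query x s)"
  unfolding comp_ratio_query[OF assms] by simp

lemma comp_ratio_unit_query:
  assumes "c = 2 ^ \<alpha> + 1" "d < 2 ^ (n + 1)"
  shows "comp_ratio c n (query (real d) 1) = 1"
proof -
  have "real (d + 1) \<le> real (2 ^ (n + 1))"
    using assms(2) by (simp only: of_nat_le_iff)
  then have query: "0 \<le> real d" "real d + 1 \<le> 2 ^ (n + 1)"
    by simp_all
  have "dag_level c n 1 (real d) \<le> n + 1"
    using dag_level_le[OF _ assms(1) query] by simp
  moreover have "n + 1 \<le> tree_level n 1 (real d)"
    using assms(2) by (intro tree_level_ge[where m = d]) simp_all
  ultimately have "dag_level c n 1 (real d) - tree_level n 1 (real d) = 0"
    by simp
  then show ?thesis
    using comp_ratio_query[OF _ assms(1) query] by simp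
qed

lemma exp_ratio_unit: "c = 2 ^ \<alpha> + 1 \<Longrightarrow> exp_ratio c n 1 = 1"
  unfolding exp_ratio_def dataset_def by (simp add: comp_ratio_unit_query)

lemma tree_level_less_of_boundary_inside:
  assumes "s > 0" "0 \<le> x" "x + s \<le> 2 ^ (n + 1)" "j \<le> n + 1"
    and "x < real m * 2 ^ (n + 1 - j)" "real m * 2 ^ (n + 1 - j) < x + s"
  shows "tree_level n s x < j"
proof (rule ccontr)
  let ?t = "tree_level n s x"
  assume "\<not> ?t < j"
  then have "n + 1 - j = (?t - j) + (n + 1 - ?t)"
    using tree_level_node(1)[OF assms(1-3)] by simp
  moreover define K B where "K = m * 2 ^ (?t - j)" and "B = (2::real) ^ (n + 1 - ?t)"
  ultimately have boundary: "real m * 2 ^ (n + 1 - j) = real K * B"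
    by (simp add: power_add)
  obtain m' where "real m' * B \<le> x" "x + s \<le> (real m' + 1) * B"
    using tree_level_node(2)[OF assms(1-3)] unfolding B_def by blast
  with assms(5,6) have "real m' * B < real K * B" "real K * B < (real m' + 1) * B"
    unfolding boundary by linarith+
  then have "real m' < real K" "real K < real m' + 1"
    by (simp_all add: B_def mult_less_cancel_right)
  then show False by simp
qed

text \<open>The DAG node with index r * 2 ^ (\<alpha> - 1) starts at r times half a block.\<close>

lemma dag_level_ge_half_grid:
  assumes "\<alpha> \<ge> 1" "c = 2 ^ \<alpha> + 1" "s > 0" "l \<le> n + 1" "r \<le> 2 ^ (l + 1) - 2"
    and "real r * (2 ^ (n + 1 - l) / 2) \<le> x"
    and "x + s \<le> real r * (2 ^ (n + 1 - l) / 2) + 2 ^ (n + 1 - l)"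
  shows "l \<le> dag_level c n s x"
proof -
  define p :: nat where "p = 2 ^ (\<alpha> - 1)"
  have alpha: "(2::nat) ^ \<alpha> = 2 * p"
    unfolding p_def using assms(1) by (simp flip: power_Suc)
  have "r * p \<le> (2 ^ (l + 1) - 2) * p"
    using assms(5) by simp
  also have "\<dots> = 2 ^ \<alpha> * 2 ^ l - 2 ^ \<alpha>"
    unfolding alpha by (simp add: algebra_simps diff_mult_distrib)
  finally have "r * p \<le> 2 ^ \<alpha> * 2 ^ l - 2 ^ \<alpha>" .
  moreover have position:
    "real (r * p) * (2 ^ (n + 1 - l) / 2 ^ \<alpha>) = real r * (2 ^ (n + 1 - l) / 2)"
    using arg_cong[OF alpha, of real] by (simp add: p_def)
  ultimately show ?thesis
    using dag_level_ge[OF assms(3,2,4), of "r * p" x] assms(6,7) unfolding position by blast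
qed

lemma dag_level_ge_short_query:
  assumes "\<alpha> \<ge> 1" "c = 2 ^ \<alpha> + 1" "s > 0" "0 \<le> x" "x + s \<le> 2 ^ (n + 1)"
    and "l \<le> n + 1" "s \<le> 2 ^ (n + 1 - l) / 2"
  shows "l \<le> dag_level c n s x"
proof -
  define b :: real where "b = 2 ^ (n + 1 - l) / 2"
  define r where "r = min (nat \<lfloor>x / b\<rfloor>) (2 ^ (l + 1) - 2)"
  have b: "b > 0" "2 ^ (l + 1) * b = 2 ^ (n + 1)"
    using power2_level_split[OF assms(6)] by (simp_all add: b_def)
  have "real (nat \<lfloor>x / b\<rfloor>) \<le> x / b"
    using assms(4) b(1) by simp
  then have "real r \<le> x / b"
    unfolding r_def by linarith
  then have lower: "real r * b \<le> x"
    using b(1) by (simp add: le_divide_eq)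
  have "x + s \<le> real r * b + 2 * b"
  proof (cases "nat \<lfloor>x / b\<rfloor> \<le> 2 ^ (l + 1) - 2")
    case True
    then have "x / b < real r + 1"
      unfolding r_def using assms(4) b(1) by simp
    then show ?thesis
      using b(1) assms(7) unfolding b_def[symmetric] by (simp add: divide_less_eq algebra_simps)
  next
    case False
    then have "real r = 2 ^ (l + 1) - 2"
      unfolding r_def by (simp add: of_nat_diff)
    then have "real r * b + 2 * b = 2 ^ (l + 1) * b"
      by (subst distrib_right[symmetric]) simp
    then show ?thesis
      using b(2) assms(5) by linarith
  qed
  then show ?thesis
    using dag_level_ge_half_grid[OF assms(1,2,3,6), of r] lower unfolding r_def b_def by simp
qed

lemma tree_level_measurable [measurable]:
  assumes "s > 0"
  shows "tree_level n s \<in> lborel \<rightarrow>\<^sub>M count_space UNIV"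
proof -
  have "tree_level n s = (\<lambda>x. Max {l. l \<le> n + 1 \<and> (\<exists>m\<in>{..<(2::nat) ^ l}.
      real m * 2 ^ (n + 1 - l) \<le> x \<and> x + s \<le> (real m + 1) * 2 ^ (n + 1 - l))})"
    unfolding tree_level_def src_level_def tree_nodes_def query_subset_tree_range_iff[OF assms]
    by (simp add: lessThan_def)
  then show ?thesis by simp
qed

lemma dag_level_measurable [measurable]:
  assumes "s > 0" "c = 2 ^ \<alpha> + 1"
  shows "dag_level c n s \<in> lborel \<rightarrow>\<^sub>M count_space UNIV"
proof -
  have "dag_level c n s = (\<lambda>x. Max {l. l \<le> n + 1 \<and> (\<exists>i\<in>{..(2::nat) ^ \<alpha> * 2 ^ l - 2 ^ \<alpha>}.
      real i * (2 ^ (n + 1 - l) / 2 ^ \<alpha>) \<le> x \<and>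
      x + s \<le> real i * (2 ^ (n + 1 - l) / 2 ^ \<alpha>) + 2 ^ (n + 1 - l))})"
    unfolding dag_level_def src_level_def dag_nodes_def query_subset_dag_range_iff[OF assms]
    using assms(2) by (simp add: atMost_def)
  then show ?thesis by simp
qed

lemma comp_ratio_set_integrable:
  assumes "s > 0" "c = 2 ^ \<alpha> + 1"
  shows "set_integrable lborel {0..2 ^ (n + 1) - s} (\<lambda>x. comp_ratio c n (query x s))"
proof -
  let ?A = "{0..(2::real) ^ (n + 1) - s}"
  have "set_integrable lborel ?A (\<lambda>x. (2::real) ^ (dag_level c n s x - tree_level n s x))"
    unfolding set_integrable_def
  proof (rule integrableI_bounded_set_indicator[where B = "2 ^ (n + 1)"])
    show "(\<lambda>x. (2::real) ^ (dag_level c n s x - tree_level n s x)) \<in> borel_measurable lborel"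
      using assms by measurable
    have "(2::real) ^ (dag_level c n s x - tree_level n s x) \<le> 2 ^ (n + 1)" if "x \<in> ?A" for x
    proof -
      have "dag_level c n s x \<le> n + 1" using that by (intro dag_level_le[OF assms]) auto
      then show ?thesis by (intro power_increasing) auto
    qed
    then show "AE x in lborel. x \<in> ?A \<longrightarrow>
        norm ((2::real) ^ (dag_level c n s x - tree_level n s x)) \<le> 2 ^ (n + 1)"
      by simp
  qed (simp_all add: emeasure_lborel_Icc_eq)
  then show ?thesis
    by (rule set_integrable_cong[THEN iffD1, rotated -1]) (auto simp: comp_ratio_query[OF assms])
qed

lemma set_integral_comp_ratio_ge_length:
  assumes "s > 0" "c = 2 ^ \<alpha> + 1" "s \<le> 2 ^ (n + 1)"
  shows "2 ^ (n + 1) - s \<le> (LINT x:{0..2 ^ (n + 1) - s}|lborel. comp_ratio c n (query x s))"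
proof -
  have "(LINT x:{0..2 ^ (n + 1) - s}|lborel. 1)
      \<le> (LINT x:{0..2 ^ (n + 1) - s}|lborel. comp_ratio c n (query x s))"
    using comp_ratio_set_integrable[OF assms(1,2)] comp_ratio_ge_1[OF assms(1,2)]
    by (intro set_integral_mono) (auto simp: set_integrable_def emeasure_lborel_Icc_eq)
  then show ?thesis
    using assms(3) by (simp add: set_integral_const)
qed

lemma exp_ratio_ge_1:
  assumes "c = 2 ^ \<alpha> + 1" "1 < s" "s \<le> 2 ^ (n + 1)"
  shows "1 \<le> exp_ratio c n s"
proof (cases "s = 2 ^ (n + 1)")
  case True
  then show ?thesis
    unfolding exp_ratio_def Let_def using assms comp_ratio_ge_1[OF _ assms(1), of s 0 n] by simp
next
  case False
  then show ?thesis
    unfolding exp_ratio_def Let_def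
    using assms set_integral_comp_ratio_ge_length[OF _ assms(1), of s n] by (simp add: le_divide_eq)
qed

lemma sum_power2_above:
  "(\<Sum>j = 1..k. if t < j then (2::real) ^ (k - j) else 0) = 2 ^ (k - t) - 1"
proof (induction k)
  case (Suc k)
  have "(\<Sum>j = 1..Suc k. if t < j then (2::real) ^ (Suc k - j) else 0)
      = 2 * (\<Sum>j = 1..k. if t < j then 2 ^ (k - j) else 0) + (if t < Suc k then 1 else 0)"
    by (simp add: sum_distrib_left Suc_diff_le if_distrib cong: if_cong)
  also have "\<dots> = 2 ^ (Suc k - t) - 1"
    unfolding Suc.IH by (simp add: Suc_diff_le)
  finally show ?case .
qed simp

lemma weighted_sum_le_power2:
  fixes f :: "nat \<Rightarrow> real"
  assumes "\<And>j. j \<in> {1..k} \<Longrightarrow> 0 \<le> f j \<and> f j \<le> 1"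
    and "\<And>j. j \<in> {1..k} \<Longrightarrow> f j \<noteq> 0 \<Longrightarrow> t < j"
  shows "(\<Sum>j = 1..k. 2 ^ (k - j) * f j) \<le> 2 ^ (k - t) - 1"
proof -
  have "(\<Sum>j = 1..k. 2 ^ (k - j) * f j) \<le> (\<Sum>j = 1..k. if t < j then (2::real) ^ (k - j) else 0)"
    using assms by (intro sum_mono) (fastforce intro: mult_left_le)
  then show ?thesis
    unfolding sum_power2_above .
qed

lemma sum_power2_times_boundary_counts:
  "(\<Sum>j = 1..k. (2::real) ^ (k - j) * (2 ^ j - 1)) = real k * 2 ^ k - (2 ^ k - 1)"
proof -
  have "(\<Sum>j = 1..k. (2::real) ^ (k - j) * (2 ^ j - 1)) = (\<Sum>j = 1..k. 2 ^ k - 2 ^ (k - j))"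
    by (intro sum.cong) (simp_all add: algebra_simps flip: power_add)
  also have "\<dots> = real k * 2 ^ k - (\<Sum>j = 1..k. if 0 < j then 2 ^ (k - j) else 0)"
    by (simp add: sum_subtractf)
  finally show ?thesis
    unfolding sum_power2_above by simp
qed

lemma card_interior_boundaries: "real (card {1..<(2::nat) ^ j}) = 2 ^ j - 1"
  by (simp add: of_nat_diff)

text \<open>The scale of a query length s: the level-k blocks of length 2 * h are the shortest
  ones that can contain a query, i.e. k = \<lfloor>log 2 (2 ^ (n + 1) / s)\<rfloor>.\<close>

locale query_scale =
  fixes n \<alpha> c k :: nat and s h :: real
  assumes alpha: "\<alpha> \<ge> 1" and c: "c = 2 ^ \<alpha> + 1"
    and k: "1 \<le> k" "k \<le> n" and h: "h = 2 ^ (n - k)" and s: "h < s" "s \<le> 2 * h"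
begin

lemma h_pos: "h > 0"
  using h by simp

lemma s_pos: "s > 0"
  using h_pos s by simp

lemma block_length: "j \<le> k \<Longrightarrow> (2::real) ^ (n + 1 - j) = 2 ^ (k - j) * (2 * h)"
  using k(2) by (simp add: h flip: power_Suc power_add)

lemma s_le_block_length:
  assumes "j \<le> k"
  shows "s \<le> 2 ^ (n + 1 - j)"
proof -
  have "2 * h \<le> 2 ^ (k - j) * (2 * h)"
    using h_pos by simp
  then show ?thesis
    using block_length[OF assms] s(2) by simp
qed

definition straddle_set :: "nat \<Rightarrow> nat \<Rightarrow> real set" where
  "straddle_set j m = {real m * 2 ^ (n + 1 - j) - s <..< real m * 2 ^ (n + 1 - j)}"

text \<open>A query starting in centred_set j m lies in the level-k DAG node
  [m * 2 ^ (n + 1 - j) - h, m * 2 ^ (n + 1 - j) + h).\<close>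

definition centred_set :: "nat \<Rightarrow> nat \<Rightarrow> real set" where
  "centred_set j m = {real m * 2 ^ (n + 1 - j) - h .. real m * 2 ^ (n + 1 - j) + h - s}"

lemma centred_subset_straddle: "centred_set j m \<subseteq> straddle_set j m"
  unfolding centred_set_def straddle_set_def using s(1) by auto

lemma straddle_subset_starts:
  assumes "j \<le> k" "m \<in> {1..<2 ^ j}"
  shows "straddle_set j m \<subseteq> {0..2 ^ (n + 1) - s}"
proof -
  let ?B = "(2::real) ^ (n + 1 - j)"
  have "real (m + 1) \<le> real (2 ^ j)"
    using assms(2) by (simp only: of_nat_le_iff) simp
  then have "(real m + 1) * ?B \<le> 2 ^ j * ?B"
    by (intro mult_right_mono) simp_all
  then have "real m * ?B + ?B \<le> 2 ^ (n + 1)"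
    using power2_level_split[of j n] assms(1) k(2) by (simp add: algebra_simps)
  moreover have "s \<le> ?B" "?B \<le> real m * ?B"
    using s_le_block_length[OF assms(1)] assms(2) by simp_all
  ultimately have "0 \<le> real m * ?B - s" "real m * ?B \<le> 2 ^ (n + 1) - s"
    by linarith+
  then show ?thesis
    unfolding straddle_set_def by auto
qed

lemma straddle_sets_disjoint:
  assumes "j \<le> k"
  shows "disjoint_family (straddle_set j)"
proof -
  let ?B = "(2::real) ^ (n + 1 - j)"
  have "straddle_set j m \<inter> straddle_set j m' = {}" if "m < m'" for m m'
  proof -
    have "real m * ?B + ?B \<le> real m' * ?B"
      using that by (metis Suc_leI distrib_right mult_1 mult_right_mono of_nat_Suc of_nat_le_iff
          zero_le_numeral zero_le_power add.commute)
    then show ?thesis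
      unfolding straddle_set_def using s_le_block_length[OF assms] that
      by (auto simp: min_def max_def)
  qed
  then show ?thesis
    unfolding disjoint_family_on_def by (metis Int_commute linorder_neqE_nat)
qed

lemma tree_level_less_of_mem_straddle_set:
  assumes "j \<le> k" "x \<in> {0..2 ^ (n + 1) - s}" "x \<in> straddle_set j m"
  shows "tree_level n s x < j"
  using assms k(2)
  by (intro tree_level_less_of_boundary_inside[OF s_pos, of x n j m]) (auto simp: straddle_set_def)

lemma dag_level_ge_of_mem_centred_set:
  assumes "j \<le> k" "m \<in> {1..<2 ^ j}" "x \<in> {0..2 ^ (n + 1) - s}" "x \<in> centred_set j m"
  shows "k \<le> dag_level c n s x"
proof -
  define q where "q = m * 2 ^ (k - j)"
  have "q \<le> (2 ^ j - 1) * 2 ^ (k - j)"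
    unfolding q_def using assms(2) by (intro mult_le_mono1) auto
  also have "\<dots> \<le> 2 ^ k - 1"
    using assms(1) by (simp add: diff_mult_distrib diff_le_mono2 flip: power_add)
  finally have "2 * q - 1 \<le> 2 ^ (k + 1) - 2"
    by simp
  moreover have "1 \<le> q"
    unfolding q_def using assms(2) by simp
  moreover have Bk: "(2::real) ^ (n + 1 - k) = 2 * h"
    using block_length[of k] by simp
  ultimately have position:
    "real (2 * q - 1) * (2 ^ (n + 1 - k) / 2) = real m * 2 ^ (n + 1 - j) - h"
    unfolding q_def using block_length[OF assms(1)] by (simp add: of_nat_diff algebra_simps)
  show ?thesis
    using dag_level_ge_half_grid[OF alpha c s_pos, of k n "2 * q - 1" x,
        unfolded position, unfolded Bk]
      \<open>2 * q - 1 \<le> 2 ^ (k + 1) - 2\<close> assms(3,4) k(2)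
    unfolding centred_set_def by simp
qed

lemma dag_level_ge_k_minus_1:
  assumes "x \<in> {0..2 ^ (n + 1) - s}"
  shows "k - 1 \<le> dag_level c n s x"
proof (rule dag_level_ge_short_query[OF alpha c s_pos])
  have "(2::real) ^ (n + 1 - (k - 1)) = 2 * (2 * h)"
    using block_length[of "k - 1"] k(1) by simp
  then show "s \<le> 2 ^ (n + 1 - (k - 1)) / 2"
    using s(2) by simp
qed (use assms k in auto)

definition straddle :: "nat \<Rightarrow> real \<Rightarrow> real" where
  "straddle j x = (\<Sum>m\<in>{1..<2 ^ j}. indicator (straddle_set j m) x)"

definition centred :: "nat \<Rightarrow> real \<Rightarrow> real" where
  "centred j x = (\<Sum>m\<in>{1..<2 ^ j}. indicator (centred_set j m) x)"

lemma straddle_le_1: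
  assumes "j \<le> k"
  shows "straddle j x \<le> 1"
proof -
  have "straddle j x = indicator (\<Union>m\<in>{1..<2 ^ j}. straddle_set j m) x"
    unfolding straddle_def
    using straddle_sets_disjoint[OF assms]
    by (intro indicator_UN_disjoint[symmetric])
      (auto intro: disjoint_family_on_mono[OF subset_UNIV])
  then show ?thesis
    by (simp add: indicator_def)
qed

lemma centred_le_straddle: "centred j x \<le> straddle j x"
  unfolding centred_def straddle_def
  using centred_subset_straddle by (intro sum_mono indicator_leI) auto

lemma straddle_nonneg: "0 \<le> straddle j x"
  unfolding straddle_def by (intro sum_nonneg) simp

lemma centred_nonneg: "0 \<le> centred j x"
  unfolding centred_def by (intro sum_nonneg) simp

lemma tree_level_less_of_straddle_nonzero:
  assumes "j \<le> k" "x \<in> {0..2 ^ (n + 1) - s}" "straddle j x \<noteq> 0"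
  shows "tree_level n s x < j"
proof -
  obtain m where "indicator (straddle_set j m) x \<noteq> (0::real)"
    using assms(3) unfolding straddle_def by (rule sum.not_neutral_contains_not_neutral)
  then show ?thesis
    using tree_level_less_of_mem_straddle_set[OF assms(1,2)]
    by (simp add: indicator_def split: if_splits)
qed

lemma dag_level_ge_of_centred_nonzero:
  assumes "j \<le> k" "x \<in> {0..2 ^ (n + 1) - s}" "centred j x \<noteq> 0"
  shows "k \<le> dag_level c n s x"
proof -
  obtain m where "m \<in> {1..<2 ^ j}" "indicator (centred_set j m) x \<noteq> (0::real)"
    using assms(3) unfolding centred_def by (rule sum.not_neutral_contains_not_neutral)
  then show ?thesis
    using dag_level_ge_of_mem_centred_set[OF assms(1)] assms(2)
    by (simp add: indicator_def split: if_splits)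
qed

lemma straddle_centred_outside:
  assumes "j \<le> k" "x \<notin> {0..2 ^ (n + 1) - s}"
  shows "straddle j x = 0" "centred j x = 0"
proof -
  have "x \<notin> straddle_set j m" if "m \<in> {1..<2 ^ j}" for m
    using straddle_subset_starts[OF assms(1) that] assms(2) by blast
  then show "straddle j x = 0"
    unfolding straddle_def by (intro sum.neutral) simp
  then show "centred j x = 0"
    using centred_le_straddle[of j x] centred_nonneg[of j x] by simp
qed

lemma weighted_straddle_le:
  assumes "x \<in> {0..2 ^ (n + 1) - s}"
  shows "(\<Sum>j = 1..k. 2 ^ (k - j) * straddle j x) \<le> 2 ^ (k - tree_level n s x) - 1"
  using straddle_nonneg straddle_le_1 tree_level_less_of_straddle_nonzero[OF _ assms]
  by (intro weighted_sum_le_power2) auto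

lemma weighted_centred_le:
  assumes "x \<in> {0..2 ^ (n + 1) - s}"
  shows "(\<Sum>j = 1..k. 2 ^ (k - j) * centred j x)
    \<le> (if k \<le> dag_level c n s x then 2 ^ (k - tree_level n s x) - 1 else 0)"
proof (cases "k \<le> dag_level c n s x")
  case True
  have "centred j x \<le> 1" if "j \<le> k" for j
    using centred_le_straddle[of j x] straddle_le_1[OF that] by (rule order_trans)
  moreover have "straddle j x \<noteq> 0" if "centred j x \<noteq> 0" for j
    using that centred_nonneg[of j x] centred_le_straddle[of j x] by simp
  ultimately have "(\<Sum>j = 1..k. 2 ^ (k - j) * centred j x) \<le> 2 ^ (k - tree_level n s x) - 1"
    using centred_nonneg tree_level_less_of_straddle_nonzero[OF _ assms]
    by (intro weighted_sum_le_power2) auto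
  with True show ?thesis
    by simp
next
  case False
  then have "centred j x = 0" if "j \<in> {1..k}" for j
    using that dag_level_ge_of_centred_nonzero[OF _ assms] by fastforce
  with False show ?thesis
    by simp
qed

text \<open>With T = tree_level n s x and D = dag_level c n s x, the identity
  2 ^ (k - T) = 1 + (\<Sum>j = 1..k. 2 ^ (k - j) * [T < j]) and D \<ge> k - 1 give
  2 * 2 ^ (D - T) \<ge> 2 ^ (k - T) * (1 + [k \<le> D]); the indicators [T < j] and [T < j \<and> k \<le> D]
  are bounded below by straddle j x and centred j x.\<close>

definition lower_bound :: "real \<Rightarrow> real" where
  "lower_bound x =
    indicator {0..2 ^ (n + 1) - s} x + (\<Sum>j = 1..k. 2 ^ (k - j) * (straddle j x + centred j x))"

lemma lower_bound_le_comp_ratio: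
  "lower_bound x \<le> 2 * (indicator {0..2 ^ (n + 1) - s} x * comp_ratio c n (query x s))"
proof (cases "x \<in> {0..2 ^ (n + 1) - s}")
  case False
  then show ?thesis
    using straddle_centred_outside by (simp add: lower_bound_def)
next
  case True
  define t D where "t = tree_level n s x" and "D = dag_level c n s x"
  have "t \<le> D" "k - 1 \<le> D"
    unfolding t_def D_def using True tree_level_le_dag_level[OF s_pos c] dag_level_ge_k_minus_1
    by auto
  note S = weighted_straddle_le[OF True, folded t_def]
  note C = weighted_centred_le[OF True, folded t_def D_def]
  have "lower_bound x = 1 + (\<Sum>j = 1..k. 2 ^ (k - j) * straddle j x)
      + (\<Sum>j = 1..k. 2 ^ (k - j) * centred j x)"
    unfolding lower_bound_def using True by (simp add: distrib_left sum.distrib)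
  also have "\<dots> \<le> 2 * 2 ^ (D - t)"
  proof (cases "k \<le> D")
    case True
    then have "(\<Sum>j = 1..k. 2 ^ (k - j) * centred j x) \<le> 2 ^ (k - t) - 1"
      using C by simp
    moreover have "(2::real) ^ (k - t) \<le> 2 ^ (D - t)"
      using True by (intro power_increasing) auto
    ultimately show ?thesis
      using S by linarith
  next
    case False
    then have "k - t = Suc (D - t)"
      using \<open>t \<le> D\<close> \<open>k - 1 \<le> D\<close> by simp
    then show ?thesis
      using S C False by simp
  qed
  also have "\<dots> = 2 * (indicator {0..2 ^ (n + 1) - s} x * comp_ratio c n (query x s))"
    unfolding t_def D_def using True comp_ratio_query[OF s_pos c] by simp
  finally show ?thesis .
qed

lemma has_integral_straddle: "has_bochner_integral lborel (straddle j) ((2 ^ j - 1) * s)"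
proof -
  have "has_bochner_integral lborel (\<lambda>x. \<Sum>m\<in>{1..<2 ^ j}. indicator (straddle_set j m) x)
      (\<Sum>m\<in>{1..<(2::nat) ^ j}. s)"
  proof (intro has_bochner_integral_sum)
    fix m
    show "has_bochner_integral lborel (indicator (straddle_set j m)) s"
      using has_bochner_integral_real_indicator[of "straddle_set j m" lborel] s_pos
      unfolding straddle_set_def by simp
  qed
  then show ?thesis
    unfolding straddle_def[abs_def] using card_interior_boundaries by simp
qed

lemma has_integral_centred: "has_bochner_integral lborel (centred j) ((2 ^ j - 1) * (2 * h - s))"
proof -
  have "has_bochner_integral lborel (\<lambda>x. \<Sum>m\<in>{1..<2 ^ j}. indicator (centred_set j m) x)
      (\<Sum>m\<in>{1..<(2::nat) ^ j}. 2 * h - s)"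
  proof (intro has_bochner_integral_sum)
    fix m
    show "has_bochner_integral lborel (indicator (centred_set j m)) (2 * h - s)"
      using has_bochner_integral_real_indicator[of "centred_set j m" lborel] s(2)
      unfolding centred_set_def by simp
  qed
  then show ?thesis
    unfolding centred_def[abs_def] using card_interior_boundaries by simp
qed

lemma has_integral_lower_bound:
  "has_bochner_integral lborel lower_bound (real k * 2 ^ (n + 1) + 2 * h - s)"
proof -
  have "s \<le> 2 ^ (n + 1)"
    using s_le_block_length[of 0] by simp
  then have "has_bochner_integral lborel lower_bound
      ((2 ^ (n + 1) - s) +
       (\<Sum>j = 1..k. 2 ^ (k - j) * ((2 ^ j - 1) * s + (2 ^ j - 1) * (2 * h - s))))"
    unfolding lower_bound_def[abs_def]
    using has_bochner_integral_real_indicator[of "{0..2 ^ (n + 1) - s}" lborel]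
    by (intro has_bochner_integral_add has_bochner_integral_sum has_bochner_integral_mult_right
        has_integral_straddle has_integral_centred) simp_all
  also have "(\<Sum>j = 1..k. 2 ^ (k - j) * ((2 ^ j - 1) * s + (2 ^ j - 1) * (2 * h - s)))
      = 2 * h * (\<Sum>j = 1..k. (2::real) ^ (k - j) * (2 ^ j - 1))"
    by (simp add: sum_distrib_left algebra_simps)
  also have "(2 ^ (n + 1) - s) + 2 * h * (\<Sum>j = 1..k. (2::real) ^ (k - j) * (2 ^ j - 1))
      = real k * 2 ^ (n + 1) + 2 * h - s"
    unfolding sum_power2_times_boundary_counts using block_length[of 0] by (simp add: algebra_simps)
  finally show ?thesis .
qed

lemma set_integral_comp_ratio_ge:
  "real k / 2 * (2 ^ (n + 1) - s)
    \<le> (LINT x:{0..2 ^ (n + 1) - s}|lborel. comp_ratio c n (query x s))"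
proof -
  let ?R = "\<lambda>x. indicator {0..2 ^ (n + 1) - s} x * comp_ratio c n (query x s)"
  have "integrable lborel ?R"
    using comp_ratio_set_integrable[OF s_pos c] by (simp add: set_integrable_def)
  then have "integral\<^sup>L lborel lower_bound \<le> integral\<^sup>L lborel (\<lambda>x. 2 * ?R x)"
    using integrable.intros[OF has_integral_lower_bound] lower_bound_le_comp_ratio
    by (intro integral_mono) auto
  then have "real k * 2 ^ (n + 1) + 2 * h - s
      \<le> 2 * (LINT x:{0..2 ^ (n + 1) - s}|lborel. comp_ratio c n (query x s))"
    using has_bochner_integral_integral_eq[OF has_integral_lower_bound]
    by (simp add: set_lebesgue_integral_def)
  moreover have "0 \<le> (real k - 1) * s + 2 * h"
    using k(1) s_pos h_pos by simp
  ultimately show ?thesis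
    by (simp add: algebra_simps)
qed

lemma exp_ratio_ge: "real k / 2 \<le> exp_ratio c n s"
proof -
  have "s \<le> 2 ^ n"
    using s_le_block_length[of 1] k(1) by simp
  moreover have "(2::real) ^ n < 2 ^ (n + 1)"
    by simp
  ultimately have "s < 2 ^ (n + 1)"
    by linarith
  moreover have "1 \<le> h"
    using h by simp
  then have "s \<noteq> 1"
    using s(1) by simp
  ultimately show ?thesis
    using set_integral_comp_ratio_ge unfolding exp_ratio_def Let_def by (simp add: le_divide_eq)
qed

end

lemma floor_log2_bounds:
  fixes y :: real
  assumes "1 \<le> y"
  shows "2 ^ nat \<lfloor>log 2 y\<rfloor> \<le> y" "y < 2 ^ (nat \<lfloor>log 2 y\<rfloor> + 1)"
proof -
  define k where "k = nat \<lfloor>log 2 y\<rfloor>"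
  have "real_of_int \<lfloor>log 2 y\<rfloor> = real k"
    unfolding k_def using assms by simp
  then have "2 powr real k \<le> y" "y < 2 powr (real k + 1)"
    using floor_log_eq_powr_iff[of y 2 "\<lfloor>log 2 y\<rfloor>"] assms by simp_all
  then show "2 ^ nat \<lfloor>log 2 y\<rfloor> \<le> y" "y < 2 ^ (nat \<lfloor>log 2 y\<rfloor> + 1)"
    unfolding k_def[symmetric] by (simp_all add: powr_realpow powr_add)
qed

lemma query_scale_floor_log:
  assumes "\<alpha> \<ge> 1" "c = 2 ^ \<alpha> + 1" "1 < s" "s \<le> 2 ^ (n + 1)"
    and "k = nat \<lfloor>log 2 (2 ^ (n + 1) / s)\<rfloor>" "1 \<le> k"
  shows "query_scale n \<alpha> c k s (2 ^ (n - k))"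
proof -
  have "2 ^ k * s \<le> 2 ^ (n + 1)" "2 ^ (n + 1) < 2 ^ (k + 1) * s"
    using floor_log2_bounds[of "2 ^ (n + 1) / s"] assms(3,4) unfolding assms(5)[symmetric]
    by (simp_all add: le_divide_eq divide_less_eq)
  moreover have "(2::real) ^ k < 2 ^ k * s"
    using assms(3) by simp
  ultimately have "(2::real) ^ k < 2 ^ (n + 1)"
    by linarith
  then have "k \<le> n"
    using power_strict_increasing_iff[of "2::real" k "n + 1"] by simp
  then have "(2::real) ^ (n + 1) = 2 ^ (k + 1) * 2 ^ (n - k)"
    by (simp flip: power_add)
  with assms(1,2,6) \<open>k \<le> n\<close> \<open>2 ^ k * s \<le> 2 ^ (n + 1)\<close> \<open>2 ^ (n + 1) < 2 ^ (k + 1) * s\<close>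
  show ?thesis
    by unfold_locales auto
qed

lemma exp_ratio_ge_half_floor_log:
  assumes "\<alpha> \<ge> 1" "c = 2 ^ \<alpha> + 1" "1 < s" "s \<le> 2 ^ (n + 1)"
  shows "1 / 2 * real_of_int \<lfloor>log 2 (2 ^ (n + 1) / s)\<rfloor> \<le> exp_ratio c n s"
proof -
  define k where "k = nat \<lfloor>log 2 (2 ^ (n + 1) / s)\<rfloor>"
  have "real_of_int \<lfloor>log 2 (2 ^ (n + 1) / s)\<rfloor> = real k"
    unfolding k_def using assms(3,4) by simp
  moreover have "real k / 2 \<le> exp_ratio c n s"
  proof (cases "k = 0")
    case True
    then show ?thesis
      using exp_ratio_ge_1[OF assms(2-4)] by simp
  next
    case False
    then show ?thesis
      using query_scale.exp_ratio_ge[OF query_scale_floor_log[OF assms k_def]] by simp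
  qed
  ultimately show ?thesis
    by simp
qed

theorem theorem3:
  fixes n \<alpha> c :: nat
  assumes "\<alpha> \<ge> 1" and "c = 2^\<alpha> + 1"
  shows "exp_ratio c n 1 = 1 \<and>
         (\<forall>s::real. 1 < s \<and> s \<le> 2^(n+1) \<longrightarrow>
           exp_ratio c n s \<ge> max 1 ((1/2) * real_of_int \<lfloor>log 2 (2^(n+1) / s)\<rfloor>))"
  using exp_ratio_unit[OF assms(2)] exp_ratio_ge_1[OF assms(2)]
    exp_ratio_ge_half_floor_log[OF assms]
  by simp

end
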